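(* Let $R$ be an integral domain, $p,q\in R$, $m\ge1$ an integer, and let $a=(a_n)_{n\ge0}$ be a linear recurrent sequence over $R$ with characteristic polynomial $(t^2-pt+q)^m$. Then $L^{(-1,p)}(a)$ is a linear recurrent sequence with the same characteristic polynomial $(t^2-pt+q)^m$.
   Context: A sequence $(a_n)$ is linear recurrent with characteristic polynomial $t^d-c_1t^{d-1}-\dots-c_d$ if $a_{n+d}=c_1a_{n+d-1}+\dots+c_da_n$ for all $n\ge0$. For $h,y\in R$, $L^{(h,y)}(a)$ is the sequence $b$ with $b_n=\sum_{i=0}^n\binom{n}{i}h^iy^{n-i}a_i$; thus $(L^{(-1,p)}(a))_n=\sum_{i=0}^n\binom{n}{i}(-1)^ip^{n-i}a_i$. *)

theory Defs
  imports "HOL-Computational_Algebra.Polynomial"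
begin

definition lin_rec_charpoly :: "'a::comm_ring_1 poly \<Rightarrow> (nat \<Rightarrow> 'a) \<Rightarrow> bool" where
  "lin_rec_charpoly P a \<longleftrightarrow> lead_coeff P = 1 \<and>
     (\<forall>n. a (n + degree P) =
          (\<Sum>i=1..degree P. (- coeff P (degree P - i)) * a (n + degree P - i)))"

definition binom_transform :: "'a::comm_ring_1 \<Rightarrow> 'a \<Rightarrow> (nat \<Rightarrow> 'a) \<Rightarrow> nat \<Rightarrow> 'a" where
  "binom_transform h y a n = (\<Sum>i=0..n. of_nat (n choose i) * h ^ i * y ^ (n - i) * a i)"

end

theory Submission
  imports Defs
begin

text \<open>A sequence a induces the linear functional on polynomials sending t^j to a j.
  The sequence satisfies the recurrence with characteristic polynomial P exactly when this
  functional kills every multiple of P. The binomial transform L^(h,y) corresponds to the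
  substitution t \<mapsto> y + h t, so it preserves the recurrence as soon as that substitution
  maps P into the ideal generated by P. For P = (t^2 - p t + q)^m and h = -1, y = p the
  substitution t \<mapsto> p - t merely swaps the two roots of t^2 - p t + q and fixes P.\<close>

definition seq_eval :: "(nat \<Rightarrow> 'a::comm_ring_1) \<Rightarrow> 'a poly \<Rightarrow> 'a" where
  "seq_eval a Q = (\<Sum>j\<le>degree Q. coeff Q j * a j)"

lemma seq_eval_bound: "degree Q \<le> N \<Longrightarrow> seq_eval a Q = (\<Sum>j\<le>N. coeff Q j * a j)"
  unfolding seq_eval_def by (rule sum.mono_neutral_left) (auto simp: coeff_eq_0)

lemma seq_eval_0 [simp]: "seq_eval a 0 = 0"
  by (simp add: seq_eval_def)

lemma seq_eval_add: "seq_eval a (Q + R) = seq_eval a Q + seq_eval a R"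
proof -
  let ?N = "max (degree Q) (degree R)"
  have "degree (Q + R) \<le> ?N"
    by (rule degree_add_le) auto
  then show ?thesis
    by (simp add: seq_eval_bound[of _ ?N] sum.distrib distrib_right)
qed

lemma seq_eval_smult: "seq_eval a (smult c Q) = c * seq_eval a Q"
  by (subst seq_eval_bound[OF degree_smult_le]) (simp add: seq_eval_def sum_distrib_left mult.assoc)

lemma seq_eval_sum: "finite A \<Longrightarrow> seq_eval a (sum f A) = (\<Sum>i\<in>A. seq_eval a (f i))"
  by (induction A rule: finite_induct) (auto simp: seq_eval_add)

lemma seq_eval_shift: "seq_eval (\<lambda>k. a (n + k)) Q = seq_eval a (monom 1 n * Q)"
proof -
  let ?c = "coeff (monom 1 n * Q)"
  have "degree (monom 1 n * Q) \<le> n + degree Q"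
    by (rule order_trans[OF degree_mult_le]) (simp add: degree_monom_le)
  then have "seq_eval a (monom 1 n * Q) = (\<Sum>k\<le>n + degree Q. ?c k * a k)"
    by (rule seq_eval_bound)
  also have "\<dots> = (\<Sum>k\<in>{n..n + degree Q}. ?c k * a k)"
    by (rule sum.mono_neutral_right) (auto simp: coeff_monom_mult)
  also have "\<dots> = (\<Sum>j\<in>{0..degree Q}. ?c (j + n) * a (j + n))"
    using sum.shift_bounds_cl_nat_ivl[of "\<lambda>k. ?c k * a k" 0 n "degree Q"]
    by (simp add: add.commute[of n "degree Q"])
  also have "\<dots> = seq_eval (\<lambda>k. a (n + k)) Q"
    unfolding seq_eval_def atLeast0AtMost
    by (rule sum.cong) (simp_all add: coeff_monom_mult add.commute[of _ n])
  finally show ?thesis ..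
qed

lemma seq_eval_multiple_eq_0:
  assumes "\<And>n. seq_eval (\<lambda>k. a (n + k)) P = 0" and "P dvd Q"
  shows "seq_eval a Q = 0"
proof -
  obtain R where "Q = R * P"
    using \<open>P dvd Q\<close> by (metis dvdE mult.commute)
  also have "R * P = (\<Sum>i\<le>degree R. smult (coeff R i) (monom 1 i * P))"
    by (subst (1) poly_as_sum_of_monoms[of R, symmetric])
      (simp add: sum_distrib_right smult_monom_mult)
  finally show ?thesis
    by (simp add: seq_eval_sum seq_eval_smult seq_eval_shift[symmetric] assms(1))
qed

lemma lin_rec_charpoly_iff_seq_eval:
  "lin_rec_charpoly P a \<longleftrightarrow> lead_coeff P = 1 \<and> (\<forall>n. seq_eval (\<lambda>k. a (n + k)) P = 0)"
proof -
  have "a (n + degree P) = (\<Sum>i=1..degree P. (- coeff P (degree P - i)) * a (n + degree P - i))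
      \<longleftrightarrow> seq_eval (\<lambda>k. a (n + k)) P = 0" if "lead_coeff P = 1" for n
  proof -
    let ?d = "degree P"
    have "(\<Sum>i=1..?d. (- coeff P (?d - i)) * a (n + ?d - i))
        = (\<Sum>i<?d. (- coeff P (?d - Suc i)) * a (n + ?d - Suc i))"
      using sum.shift_bounds_cl_Suc_ivl[of "\<lambda>i. (- coeff P (?d - i)) * a (n + ?d - i)" 0 "?d - 1"]
      by (cases ?d) (auto simp: atLeast0AtMost lessThan_Suc_atMost)
    also have "\<dots> = (\<Sum>j<?d. (- coeff P j) * a (n + j))"
      using sum.nat_diff_reindex[of "\<lambda>j. (- coeff P j) * a (n + j)" ?d]
      by (simp add: Suc_diff_Suc)
    also have "\<dots> = - (\<Sum>j<?d. coeff P j * a (n + j))"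
      by (simp add: sum_negf)
    finally have rhs: "(\<Sum>i=1..?d. (- coeff P (?d - i)) * a (n + ?d - i))
        = - (\<Sum>j<?d. coeff P j * a (n + j))" .
    have "seq_eval (\<lambda>k. a (n + k)) P = (\<Sum>j<?d. coeff P j * a (n + j)) + a (n + ?d)"
      using that by (simp add: seq_eval_def lessThan_Suc_atMost[symmetric])
    with rhs show ?thesis
      by (auto simp: add_eq_0_iff add.commute)
  qed
  then show ?thesis
    unfolding lin_rec_charpoly_def by blast
qed

lemma pcompose_monom: "pcompose (monom c j) r = smult c (r ^ j)"
proof -
  have "pcompose ([:0, 1:] ^ j) r = r ^ j"
    by (induct j) (simp_all add: pcompose_mult pcompose_1 pcompose_pCons)
  then show ?thesis
    by (simp add: monom_altdef pcompose_smult)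
qed

lemma pcompose_as_sum: "pcompose Q r = (\<Sum>j\<le>degree Q. smult (coeff Q j) (r ^ j))"
  by (subst (1) poly_as_sum_of_monoms[of Q, symmetric]) (simp add: pcompose_sum pcompose_monom)

lemma pcompose_power: "pcompose (Q ^ k) r = pcompose Q r ^ k"
  by (induct k) (simp_all add: pcompose_mult pcompose_1)

lemma binom_transform_eq_seq_eval: "binom_transform h y a n = seq_eval a ([:y, h:] ^ n)"
proof -
  have "degree [:y, h:] \<le> 1"
    by simp
  then have "degree ([:y, h:] ^ n) \<le> n"
    using degree_power_le[of "[:y, h:]" n] mult_le_mono1[of "degree [:y, h:]" 1 n] by linarith
  then show ?thesis
    by (auto simp: seq_eval_bound binom_transform_def atLeast0AtMost coeff_linear_poly_power
        mult_ac intro!: sum.cong)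
qed

lemma seq_eval_binom_transform:
  "seq_eval (binom_transform h y a) Q = seq_eval a (pcompose Q [:y, h:])"
  by (simp add: seq_eval_def[of "binom_transform h y a"] binom_transform_eq_seq_eval
      pcompose_as_sum[of Q] seq_eval_sum seq_eval_smult)

lemma lin_rec_charpoly_binom_transform:
  assumes "lin_rec_charpoly P a" and "P dvd pcompose P [:y, h:]"
  shows "lin_rec_charpoly P (binom_transform h y a)"
proof -
  have P: "lead_coeff P = 1" "\<And>n. seq_eval (\<lambda>k. a (n + k)) P = 0"
    using assms(1) by (auto simp: lin_rec_charpoly_iff_seq_eval)
  have "seq_eval (\<lambda>k. binom_transform h y a (n + k)) P = 0" for n
  proof -
    have "seq_eval (\<lambda>k. binom_transform h y a (n + k)) P
        = seq_eval a ([:y, h:] ^ n * pcompose P [:y, h:])"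
      by (simp add: seq_eval_shift seq_eval_binom_transform pcompose_mult pcompose_monom)
    also have "\<dots> = 0"
      using assms(2) by (intro seq_eval_multiple_eq_0[OF P(2)]) simp
    finally show ?thesis .
  qed
  with P(1) show ?thesis
    by (simp add: lin_rec_charpoly_iff_seq_eval)
qed

lemma pcompose_quadratic_reflection:
  fixes p q :: "'a::comm_ring_1"
  shows "pcompose [:q, - p, 1:] [:p, -1:] = [:q, - p, 1:]"
proof -
  have unfold: "pcompose [:q, - p, 1:] [:p, -1:] = [:q:] + [:p, -1:] * ([:-p:] + [:p, -1:])"
    by (simp add: pcompose_pCons)
  have square: "[:p, -1:] * [:p, -1:] = [:p * p, -(2 * p), 1:]"
    by (simp add: mult_pCons_left smult_add_left algebra_simps)
  show ?thesis
    unfolding unfold distrib_left square by (simp add: mult_pCons_left algebra_simps)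
qed

theorem corollary13:
  fixes p q :: "'a::idom" and m :: nat and a :: "nat \<Rightarrow> 'a"
  assumes "m \<ge> 1"
    and "lin_rec_charpoly ([:q, - p, 1:] ^ m) a"
  shows "lin_rec_charpoly ([:q, - p, 1:] ^ m) (binom_transform (- 1) p a)"
proof (rule lin_rec_charpoly_binom_transform[OF assms(2)])
  show "[:q, - p, 1:] ^ m dvd pcompose ([:q, - p, 1:] ^ m) [:p, - 1:]"
    by (simp add: pcompose_power pcompose_quadratic_reflection)
qed

end
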